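(* In $V_q$ set $x=e_1$, $y=e_2$, $\iota=e_{r-2}$ and $w=\epsilon_2e_{r-3}$. Then $$x^2=y-\epsilon_2=-w^2,\qquad \iota e_n=(-1)^n\epsilon_{n+1}e_{r-2-n}\ (0\le n\le r-2),\qquad \iota^2=-1.$$
   Context: Let $r\ge 5$ and $s$ be coprime odd integers with $0<s<r$, $q=\exp(i\pi s/r)$. For an integer $n$ put $[n]=\frac{q^n-q^{-n}}{q-q^{-1}}$, $[n]!=[n][n-1]\cdots[1]$, and for $1\le n\le r-1$ let $\epsilon_n=\operatorname{sign}[n]=(-1)^{\lfloor ns/r\rfloor}$ (so $\epsilon_1=1$ and $\epsilon_n=\epsilon_{r-n}$). A triple $(i,j,k)\in\{0,\dots,r-2\}^3$ is $r$-admissible if $i\le j+k$, $j\le i+k$, $k\le i+j$, $i+j+k$ is even and $i+j+k\le 2r-4$; for such a triple write $i=b+c$, $j=a+c$, $k=a+b$ and set $\langle i,j,k\rangle=(-1)^{a+b+c}\frac{[a+b+c+1]![a]![b]![c]!}{[a+b]![a+c]![b+c]!}$. Let $V_q$ be the $\mathbb{Q}$-vector space with basis $e_0,\dots,e_{r-2}$, with the symmetric bilinear form $\eta$ for which this basis is orthogonal and $\eta(e_i,e_i)=(-1)^i\epsilon_{i+1}$, and the symmetric trilinear form $\omega$ with $\omega(e_i,e_j,e_k)=\operatorname{sign}\langle i,j,k\rangle$ if $(i,j,k)$ is $r$-admissible and $0$ otherwise. The product on $V_q$ is defined by $\eta(x\cdot y,z)=\omega(x,y,z)$, giving a commutative associative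 unital algebra with unit $e_0=1$. *)

theory Defs
  imports Complex_Main
begin

definition qroot :: "nat \<Rightarrow> nat \<Rightarrow> complex" where
  "qroot r s = exp (\<i> * of_real (pi * real s / real r))"

definition qint :: "nat \<Rightarrow> nat \<Rightarrow> int \<Rightarrow> complex" where
  "qint r s n = (qroot r s powi n - qroot r s powi (- n)) / (qroot r s - inverse (qroot r s))"

definition qfact :: "nat \<Rightarrow> nat \<Rightarrow> nat \<Rightarrow> complex" where
  "qfact r s n = (\<Prod>k\<in>{1..n}. qint r s (int k))"

definition rsign :: "real \<Rightarrow> rat" where
  "rsign t = (if t > 0 then 1 else if t < 0 then -1 else 0)"

text \<open>epsilon_n = sign [n] ([n] is real).\<close>
definition qeps :: "nat \<Rightarrow> nat \<Rightarrow> nat \<Rightarrow> rat" where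
  "qeps r s n = rsign (Re (qint r s (int n)))"

definition r_admissible :: "nat \<Rightarrow> nat \<Rightarrow> nat \<Rightarrow> nat \<Rightarrow> bool" where
  "r_admissible r i j k \<longleftrightarrow> i \<le> r - 2 \<and> j \<le> r - 2 \<and> k \<le> r - 2 \<and>
     i \<le> j + k \<and> j \<le> i + k \<and> k \<le> i + j \<and> even (i + j + k) \<and> i + j + k \<le> 2 * r - 4"

definition theta :: "nat \<Rightarrow> nat \<Rightarrow> nat \<Rightarrow> nat \<Rightarrow> nat \<Rightarrow> complex" where
  "theta r s i j k =
     (let a = (j + k - i) div 2; b = (i + k - j) div 2; c = (i + j - k) div 2 in
      (-1) ^ (a + b + c) * qfact r s (a + b + c + 1) * qfact r s a * qfact r s b * qfact r s c
      / (qfact r s (a + b) * qfact r s (a + c) * qfact r s (b + c)))"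

text \<open>Elements of V_q: coefficient functions nat => rat (coordinates w.r.t. e_0..e_{r-2}).\<close>
definition ebasis :: "nat \<Rightarrow> nat \<Rightarrow> rat" where
  "ebasis n = (\<lambda>k. if k = n then 1 else 0)"

definition vscale :: "rat \<Rightarrow> (nat \<Rightarrow> rat) \<Rightarrow> nat \<Rightarrow> rat" where
  "vscale c v = (\<lambda>k. c * v k)"

definition etaD :: "nat \<Rightarrow> nat \<Rightarrow> nat \<Rightarrow> rat" where
  "etaD r s i = (-1) ^ i * qeps r s (i + 1)"

definition omegaB :: "nat \<Rightarrow> nat \<Rightarrow> nat \<Rightarrow> nat \<Rightarrow> nat \<Rightarrow> rat" where
  "omegaB r s i j k = (if r_admissible r i j k then rsign (Re (theta r s i j k)) else 0)"

definition omega :: "nat \<Rightarrow> nat \<Rightarrow> (nat \<Rightarrow> rat) \<Rightarrow> (nat \<Rightarrow> rat) \<Rightarrow> (nat \<Rightarrow> rat) \<Rightarrow> rat" where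
  "omega r s x y z = (\<Sum>i\<le>r-2. \<Sum>j\<le>r-2. \<Sum>k\<le>r-2. x i * y j * z k * omegaB r s i j k)"

text \<open>Product determined by eta(x.y, e_k) = omega(x,y,e_k); since eta is diagonal
  with entries +-1 on the basis, the k-th coordinate is eta(e_k,e_k) * omega(x,y,e_k).\<close>
definition vmul :: "nat \<Rightarrow> nat \<Rightarrow> (nat \<Rightarrow> rat) \<Rightarrow> (nat \<Rightarrow> rat) \<Rightarrow> nat \<Rightarrow> rat" where
  "vmul r s x y = (\<lambda>k. if k \<le> r - 2 then etaD r s k * omega r s x y (ebasis k) else 0)"

end

theory Submission imports Defs begin

text \<open>With \<open>t = \<pi> s / r\<close> the quantum integers are real, \<open>[n] = sin (n t) / sin t\<close>; coprimality
  makes them nonzero for \<open>0 < n < r\<close>, and since \<open>s\<close> is odd they satisfy \<open>[r - n] = [n]\<close>.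
  Because \<open>\<eta>\<close> is diagonal with entries \<open>\<plusminus>1\<close>, \<open>e\<^sub>a e\<^sub>b = \<Sum>\<^sub>k \<eta>(e\<^sub>k, e\<^sub>k) sign \<langle>a, b, k\<rangle> e\<^sub>k\<close>
  over the admissible \<open>k\<close>. For \<open>e\<^sub>1\<^sup>2\<close> and \<open>e\<^sub>r\<^sub>-\<^sub>3\<^sup>2\<close> only \<open>k = 0, 2\<close> are admissible, for
  \<open>\<iota> e\<^sub>n\<close> only \<open>k = r - 2 - n\<close>, and the theta symbols involved collapse to
  \<open>\<langle>j + k, j, k\<rangle> = (-1)\<^bsup>j+k\<^esup> [j + k + 1]\<close> and
  \<open>\<langle>i + 1, i + 1, 2\<rangle> = (-1)\<^sup>i [i + 2] [i + 3] / ([2] [i + 1])\<close>.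
  The signs are then read off using the reflection symmetry and the parity of \<open>r\<close>.\<close>

definition qnum :: "nat \<Rightarrow> nat \<Rightarrow> nat \<Rightarrow> real" where
  "qnum r s n = sin (real n * (pi * real s / real r)) / sin (pi * real s / real r)"

definition qnumfact :: "nat \<Rightarrow> nat \<Rightarrow> nat \<Rightarrow> real" where
  "qnumfact r s n = (\<Prod>k\<in>{1..n}. qnum r s k)"

lemma qint_of_nat: "qint r s (int n) = of_real (qnum r s n)"
proof -
  define t where "t = pi * real s / real r"
  have q: "qroot r s = cis t"
    by (simp add: qroot_def cis_conv_exp t_def)
  have cis_diff: "cis a - cis (- a) = of_real (2 * sin a) * \<i>" for a
    by (simp add: complex_eq_iff)
  have "qint r s (int n) = (cis (real n * t) - cis (- (real n * t))) / (cis t - cis (- t))"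
    unfolding qint_def q cis_power_int cis_inverse[symmetric] by (simp add: cis_power_int)
  also have "\<dots> = of_real (2 * sin (real n * t)) * \<i> / (of_real (2 * sin t) * \<i>)"
    by (simp only: cis_diff)
  finally show ?thesis
    by (simp add: qnum_def t_def of_real_divide)
qed

lemma qfact_eq_qnumfact: "qfact r s n = of_real (qnumfact r s n)"
  by (simp add: qfact_def qnumfact_def qint_of_nat)

lemma qeps_eq_rsign_qnum: "qeps r s n = rsign (qnum r s n)"
  by (simp add: qeps_def qint_of_nat)

lemma sin_multiple_nonzero:
  assumes "coprime r s" and "0 < k" and "k < r"
  shows "sin (real k * (pi * real s / real r)) \<noteq> 0"
proof
  assume "sin (real k * (pi * real s / real r)) = 0"
  then obtain i :: int where "real k * (pi * real s / real r) = of_int i * pi"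
    by (auto simp: sin_zero_iff_int2)
  then have "real (k * s) = real_of_int (i * int r)"
    using assms by (simp add: field_simps)
  then have "int (k * s) = i * int r"
    by linarith
  then have "r dvd k * s"
    by (metis dvd_triv_right of_nat_dvd_iff)
  with \<open>coprime r s\<close> have "r dvd k"
    by (simp add: coprime_dvd_mult_left_iff)
  with assms show False
    by (auto dest: dvd_imp_le)
qed

lemma qnum_1:
  assumes "coprime r s" and "1 < r"
  shows "qnum r s 1 = 1"
  using sin_multiple_nonzero[of r s 1] assms by (simp add: qnum_def)

lemma qnum_nonzero:
  assumes "coprime r s" and "0 < k" and "k < r"
  shows "qnum r s k \<noteq> 0"
  using sin_multiple_nonzero[of r s k] sin_multiple_nonzero[of r s 1] assms
  by (simp add: qnum_def)

lemma qnum_reflect: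
  assumes "odd s" and "k \<le> r"
  shows "qnum r s (r - k) = qnum r s k"
proof (cases "r = 0")
  case False
  have "real (r - k) * (pi * real s / real r) = real s * pi - real k * (pi * real s / real r)"
    using assms False by (simp add: of_nat_diff field_simps)
  moreover have "sin (real s * pi - x) = sin x" for x
    using \<open>odd s\<close> by (simp add: sin_diff)
  ultimately show ?thesis
    by (simp add: qnum_def)
qed (use assms in simp)

lemma qnumfact_Suc: "qnumfact r s (Suc n) = qnumfact r s n * qnum r s (Suc n)"
  by (simp add: qnumfact_def prod.nat_ivl_Suc' mult.commute)

lemma qnumfact_nonzero:
  assumes "coprime r s" and "n < r"
  shows "qnumfact r s n \<noteq> 0"
  unfolding qnumfact_def using assms qnum_nonzero[OF \<open>coprime r s\<close>] by auto

lemma rsign_mult: "rsign (a * b) = rsign a * rsign b"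
  by (auto simp: rsign_def zero_less_mult_iff mult_less_0_iff)

lemma rsign_divide: "rsign (a / b) = rsign a * rsign b"
  by (auto simp: rsign_def zero_less_divide_iff divide_less_0_iff)

lemma rsign_neg_one_power: "rsign ((-1) ^ n) = (-1) ^ n"
  by (induction n) (auto simp: rsign_def)

lemma rsign_mult_self: "a \<noteq> 0 \<Longrightarrow> rsign a * rsign a = 1"
  by (auto simp: rsign_def)

lemma qeps_1:
  assumes "coprime r s" and "1 < r"
  shows "qeps r s 1 = 1"
  using qnum_1[OF assms] by (simp add: qeps_eq_rsign_qnum rsign_def)

lemma qeps_reflect:
  assumes "odd s" and "k \<le> r"
  shows "qeps r s (r - k) = qeps r s k"
  using assms by (simp add: qeps_eq_rsign_qnum qnum_reflect)

lemma qeps_mult_self: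
  assumes "coprime r s" and "0 < k" and "k < r"
  shows "qeps r s k * qeps r s k = 1"
  using assms by (simp add: qeps_eq_rsign_qnum qnum_nonzero rsign_mult_self)

lemma theta_add:
  assumes "coprime r s" and "i + j < r"
  shows "theta r s (i + j) i j = of_real ((-1) ^ (i + j) * qnum r s (i + j + 1))"
proof -
  have "(i + j - (i + j)) div 2 = 0" "(i + j + j - i) div 2 = j" "(i + j + i - j) div 2 = i"
    by simp_all
  then have "theta r s (i + j) i j = of_real ((-1) ^ (j + i) * qnumfact r s (j + i + 1)
      * qnumfact r s j * qnumfact r s i / (qnumfact r s j * qnumfact r s i * qnumfact r s (j + i)))"
    by (simp add: theta_def qfact_eq_qnumfact qnumfact_def)
  moreover have "qnumfact r s i \<noteq> 0" "qnumfact r s j \<noteq> 0" "qnumfact r s (i + j) \<noteq> 0"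
    using assms qnumfact_nonzero by auto
  ultimately show ?thesis
    by (simp add: qnumfact_Suc[of r s "i + j", simplified] add.commute)
qed

lemma theta_diag_two:
  assumes "coprime r s" and "i + 1 < r"
  shows "theta r s (Suc i) (Suc i) 2
    = of_real ((-1) ^ i * qnum r s (i + 2) * qnum r s (i + 3) / (qnum r s 2 * qnum r s (i + 1)))"
proof -
  let ?F = "qnumfact r s" and ?q = "qnum r s"
  have "(Suc i + 2 - Suc i) div 2 = 1" "(Suc i + Suc i - 2) div 2 = i"
    by simp_all
  then have "theta r s (Suc i) (Suc i) 2 = of_real ((-1) ^ (i + 2) * ?F (i + 3) * ?F 1 * ?F 1 * ?F i
      / (?F 2 * ?F (i + 1) * ?F (i + 1)))"
    by (simp add: theta_def qfact_eq_qnumfact ac_simps numeral_eq_Suc)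
  moreover have "?F 1 = 1" "?F 2 = ?q 2"
    using qnum_1[OF assms(1)] assms(2) by (simp_all add: qnumfact_def numeral_eq_Suc)
  moreover have "?F (i + 3) = ?F i * ?q (i + 1) * ?q (i + 2) * ?q (i + 3)" "?F (i + 1) = ?F i * ?q (i + 1)"
    by (simp_all add: qnumfact_Suc numeral_eq_Suc)
  moreover have "?F i \<noteq> 0" "?q (i + 1) \<noteq> 0"
    using assms qnumfact_nonzero qnum_nonzero by auto
  ultimately show ?thesis
    by (simp add: field_simps)
qed

lemma omegaB_add:
  assumes "coprime r s" and "i + j + 2 \<le> r"
  shows "omegaB r s (i + j) i j = (-1) ^ (i + j) * qeps r s (i + j + 1)"
proof -
  have "r_admissible r (i + j) i j"
    using assms(2) unfolding r_admissible_def by presburger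
  then show ?thesis
    using assms by (simp add: omegaB_def theta_add rsign_mult rsign_neg_one_power qeps_eq_rsign_qnum)
qed

lemma omegaB_diag_two:
  assumes "coprime r s" and "i + 4 \<le> r"
  shows "omegaB r s (Suc i) (Suc i) 2
    = (-1) ^ i * (qeps r s 2 * qeps r s (i + 1) * qeps r s (i + 2) * qeps r s (i + 3))"
proof -
  have "r_admissible r (Suc i) (Suc i) 2"
    using assms(2) unfolding r_admissible_def by presburger
  then show ?thesis
    using assms
    by (simp add: omegaB_def theta_diag_two rsign_mult rsign_divide rsign_neg_one_power
        qeps_eq_rsign_qnum ac_simps)
qed

lemma omega_ebasis:
  assumes "a \<le> r - 2" and "b \<le> r - 2" and "c \<le> r - 2"
  shows "omega r s (ebasis a) (ebasis b) (ebasis c) = omegaB r s a b c"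
proof -
  have "ebasis a i * ebasis b j * ebasis c k * omegaB r s i j k
      = (if k = c then if j = b then if i = a then omegaB r s a b c else 0 else 0 else 0)" for i j k
    by (simp add: ebasis_def)
  then show ?thesis
    using assms by (simp add: omega_def)
qed

lemma vmul_ebasis:
  assumes "a \<le> r - 2" and "b \<le> r - 2"
  shows "vmul r s (ebasis a) (ebasis b) k = (if k \<le> r - 2 then etaD r s k * omegaB r s a b k else 0)"
  using assms by (simp add: vmul_def omega_ebasis)

lemma vmul_vscale: "vmul r s (vscale c u) (vscale d v) = vscale (c * d) (vmul r s u v)"
  by (simp add: vmul_def omega_def vscale_def sum_distrib_left mult_ac fun_eq_iff)

text \<open>The hypothesis says \<open>m = 1\<close> or \<open>m = r - 3\<close>; then \<open>e\<^sub>0\<close> and \<open>e\<^sub>2\<close> are the only summands.\<close>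

lemma vmul_ebasis_self_near_end:
  assumes "min m (r - 2 - m) = 1"
  shows "vmul r s (ebasis m) (ebasis m)
    = (\<lambda>k. if k = 0 then qeps r s 1 * omegaB r s m m 0
           else if k = 2 then qeps r s 3 * omegaB r s m m 2 else 0)"
proof
  fix k
  have m: "m \<le> r - 2"
    using assms by linarith
  have "r_admissible r m m k \<longleftrightarrow> k \<le> r - 2 \<and> k \<le> 2 * m \<and> 2 * m + k \<le> 2 * r - 4 \<and> even k"
    using m unfolding r_admissible_def by auto
  moreover have "k \<le> 2 * m \<and> 2 * m + k \<le> 2 * r - 4 \<longleftrightarrow> k \<le> 2" "2 \<le> r - 2"
    using assms by linarith+
  ultimately have "k \<le> r - 2 \<and> r_admissible r m m k \<longleftrightarrow> k = 0 \<or> k = 2"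
    by (auto elim: oddE)
  then show "vmul r s (ebasis m) (ebasis m) k = (if k = 0 then qeps r s 1 * omegaB r s m m 0
      else if k = 2 then qeps r s 3 * omegaB r s m m 2 else 0)"
    using vmul_ebasis[OF m m, of s k] by (auto simp: omegaB_def etaD_def)
qed

lemma vmul_ebasis_top:
  assumes "n \<le> r - 2"
  shows "vmul r s (ebasis (r - 2)) (ebasis n)
    = vscale (etaD r s (r - 2 - n) * omegaB r s (r - 2) n (r - 2 - n)) (ebasis (r - 2 - n))"
proof
  fix k
  have "k \<le> r - 2 \<and> r_admissible r (r - 2) n k \<longleftrightarrow> k = r - 2 - n \<and> r_admissible r (r - 2) n k"
    using assms unfolding r_admissible_def by linarith
  then show "vmul r s (ebasis (r - 2)) (ebasis n) k
      = vscale (etaD r s (r - 2 - n) * omegaB r s (r - 2) n (r - 2 - n)) (ebasis (r - 2 - n)) k"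
    using vmul_ebasis[OF order_refl assms, of s k]
    by (auto simp: omegaB_def vscale_def ebasis_def)
qed

lemma ebasis_1_square:
  assumes "coprime r s" and "5 \<le> r"
  shows "vmul r s (ebasis 1) (ebasis 1) = ebasis 2 - vscale (qeps r s 2) (ebasis 0)"
proof -
  have "min 1 (r - 2 - 1) = 1"
    using assms(2) by simp
  moreover have "omegaB r s 1 1 0 = - qeps r s 2"
    using omegaB_add[of r s 1 0] assms by (simp add: numeral_2_eq_2)
  moreover have "omegaB r s 1 1 2 = qeps r s 3"
    using omegaB_diag_two[of r s 0] assms qeps_1 qeps_mult_self[of r s 2] by (simp add: numeral_2_eq_2)
  ultimately show ?thesis
    using vmul_ebasis_self_near_end[of 1 r s] qeps_1 qeps_mult_self[of r s 3] assms
    by (auto simp: fun_eq_iff ebasis_def vscale_def)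
qed

lemma ebasis_r3_square:
  assumes "coprime r s" and "odd r" and "odd s" and "5 \<le> r"
  shows "vmul r s (ebasis (r - 3)) (ebasis (r - 3)) = vscale (qeps r s 2) (ebasis 0) - ebasis 2"
proof -
  have reflect: "qeps r s (r - 1) = 1" "qeps r s (r - 2) = qeps r s 2" "qeps r s (r - 3) = qeps r s 3"
    using qeps_reflect[OF \<open>odd s\<close>, of 1 r] qeps_reflect[OF \<open>odd s\<close>, of 2 r]
      qeps_reflect[OF \<open>odd s\<close>, of 3 r] qeps_1[OF \<open>coprime r s\<close>] assms(4) by auto
  have "even (r - 3)" "odd (r - 4)"
    using assms(2,4) by simp_all
  have "min (r - 3) (r - 2 - (r - 3)) = 1"
    using assms(4) by simp
  moreover have "omegaB r s (r - 3) (r - 3) 0 = qeps r s 2"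
  proof -
    have "r - 3 + 0 = r - 3" "r - 3 + 0 + 1 = r - 2"
      using assms(4) by simp_all
    then show ?thesis
      using omegaB_add[of r s "r - 3" 0] assms(1,4) reflect \<open>even (r - 3)\<close> by simp
  qed
  moreover have "omegaB r s (r - 3) (r - 3) 2 = - qeps r s 3"
  proof -
    have "Suc (r - 4) = r - 3" "r - 4 + 1 = r - 3" "r - 4 + 2 = r - 2" "r - 4 + 3 = r - 1"
      using assms(4) by simp_all
    then show ?thesis
      using omegaB_diag_two[of r s "r - 4"] assms(1,4) reflect \<open>odd (r - 4)\<close> qeps_mult_self[of r s 2]
      by simp
  qed
  ultimately show ?thesis
    using vmul_ebasis_self_near_end[of "r - 3" r s] qeps_1 qeps_mult_self[of r s 3] assms
    by (auto simp: fun_eq_iff ebasis_def vscale_def)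
qed

lemma ebasis_top_mult:
  assumes "coprime r s" and "odd r" and "odd s" and "3 \<le> r" and "n \<le> r - 2"
  shows "vmul r s (ebasis (r - 2)) (ebasis n) = vscale ((-1) ^ n * qeps r s (n + 1)) (ebasis (r - 2 - n))"
proof -
  have "omegaB r s (r - 2) n (r - 2 - n) = -1"
  proof -
    have "odd (r - 2)" "r - 2 + 1 = r - 1"
      using assms(2,4) by simp_all
    then show ?thesis
      using omegaB_add[of r s n "r - 2 - n"] assms qeps_reflect[OF \<open>odd s\<close>, of 1 r] qeps_1
      by simp
  qed
  moreover have "etaD r s (r - 2 - n) = - ((-1) ^ n * qeps r s (n + 1))"
  proof -
    have "r - 2 - n + n = r - 2" "odd (r - 2)"
      using assms(2,4,5) by simp_all
    then have "even (r - 2 - n) \<longleftrightarrow> odd n"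
      by (metis even_add)
    moreover have "r - 2 - n + 1 = r - (n + 1)"
      using assms(4,5) by simp
    ultimately show ?thesis
      using qeps_reflect[OF \<open>odd s\<close>, of "n + 1" r] assms(4,5) by (simp add: etaD_def minus_one_power_iff)
  qed
  ultimately show ?thesis
    using vmul_ebasis_top[OF assms(5), of s] by simp
qed

theorem mainTheorem5:
  fixes r s :: nat
  assumes "5 \<le> r" and "odd r" and "odd s" and "coprime r s" and "0 < s" and "s < r"
  defines "x \<equiv> ebasis 1"
    and "y \<equiv> ebasis 2"
    and "\<iota> \<equiv> ebasis (r - 2)"
    and "w \<equiv> vscale (qeps r s 2) (ebasis (r - 3))"
  shows "vmul r s x x = y - vscale (qeps r s 2) (ebasis 0) \<and>
         vmul r s x x = - vmul r s w w \<and>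
         (\<forall>n \<le> r - 2. vmul r s \<iota> (ebasis n) = vscale ((-1) ^ n * qeps r s (n + 1)) (ebasis (r - 2 - n))) \<and>
         vmul r s \<iota> \<iota> = - ebasis 0"
proof -
  have "vmul r s x x = y - vscale (qeps r s 2) (ebasis 0)"
    using ebasis_1_square assms(1,4) by (simp add: x_def y_def)
  moreover have "vmul r s w w = vscale (qeps r s 2) (ebasis 0) - ebasis 2"
    unfolding w_def vmul_vscale using ebasis_r3_square[of r s] qeps_mult_self[of r s 2] assms(1-4)
    by (simp add: vscale_def fun_eq_iff)
  moreover have \<iota>_mult: "\<forall>n \<le> r - 2. vmul r s \<iota> (ebasis n)
      = vscale ((-1) ^ n * qeps r s (n + 1)) (ebasis (r - 2 - n))"
    using ebasis_top_mult assms(1-4) by (simp add: \<iota>_def)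
  moreover have "vmul r s \<iota> \<iota> = - ebasis 0"
  proof -
    have "r - 2 + 1 = r - 1" "odd (r - 2)"
      using assms(1,2) by simp_all
    then have "(-1) ^ (r - 2) * qeps r s (r - 2 + 1) = -1"
      using qeps_reflect[OF \<open>odd s\<close>, of 1 r] qeps_1[OF \<open>coprime r s\<close>] assms(1) by simp
    then show ?thesis
      using \<iota>_mult by (simp add: \<iota>_def vscale_def fun_eq_iff)
  qed
  ultimately show ?thesis
    by (simp add: y_def fun_eq_iff)
qed

end
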